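(* Let $G=(V,E)$ be a chordal graph and $T$ a spanning tree of $G$ rooted in $s\in V$. Then $T$ is an $\mathcal L$-tree of LexDFS of $G$ if and only if $T$ is an $\mathcal L$-tree of LexBFS of $G$.
   Context: Graphs are finite, simple, undirected and connected. A graph is chordal if it has no induced cycle of length greater than 3. LexDFS started at $s$: label $s$ with $(0)$, all other vertices with the empty label; for $i=1,\dots,n$ pick an unnumbered vertex $v$ with lexicographically largest label, set $\sigma(i)=v$, and prepend $i$ to the label of each unnumbered neighbor of $v$. LexBFS started at $s$: label $s$ with $(n)$, others empty; same loop but append $n-i$ to the label of each unnumbered neighbor of $v$. Orders of these searches are all possible outputs. The $\mathcal L$-tree of a vertex order $(v_1,\dots,v_n)$ is the spanning tree rooted at $v_1$ with an edge from each $v_i$ ($i>1$) to its rightmost neighbor $v_j$ with $j<i$. A spanning tree $T$ rooted at $s$ is an $\mathcal L$-tree of a search $\mathcal P$ of $G$ if some $\mathcal P$-order of $G$ starting at $s$ has $\mathcal L$-tree $T$. *)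

theory Defs
  imports Main
begin

definition graph :: "'a set \<Rightarrow> ('a \<Rightarrow> 'a \<Rightarrow> bool) \<Rightarrow> bool" where
  "graph V E \<longleftrightarrow> finite V \<and> V \<noteq> {} \<and>
     (\<forall>u v. E u v \<longrightarrow> u \<in> V \<and> v \<in> V) \<and>
     (\<forall>u v. E u v \<longrightarrow> E v u) \<and> (\<forall>v. \<not> E v v) \<and>
     (\<forall>u\<in>V. \<forall>v\<in>V. E\<^sup>*\<^sup>* u v)"

definition induced_cycle :: "'a set \<Rightarrow> ('a \<Rightarrow> 'a \<Rightarrow> bool) \<Rightarrow> 'a list \<Rightarrow> bool" where
  "induced_cycle V E cs \<longleftrightarrow> distinct cs \<and> set cs \<subseteq> V \<and> length cs \<ge> 3 \<and>
     (\<forall>i < length cs. E (cs ! i) (cs ! ((i + 1) mod length cs))) \<and>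
     (\<forall>i < length cs. \<forall>j < length cs. E (cs ! i) (cs ! j) \<longrightarrow>
        j = (i + 1) mod length cs \<or> i = (j + 1) mod length cs)"

definition chordal :: "'a set \<Rightarrow> ('a \<Rightarrow> 'a \<Rightarrow> bool) \<Rightarrow> bool" where
  "chordal V E \<longleftrightarrow> (\<forall>cs. induced_cycle V E cs \<longrightarrow> length cs \<le> 3)"

text \<open>Lexicographic strict order on labels (proper prefixes are smaller).\<close>
definition lex_less :: "nat list \<Rightarrow> nat list \<Rightarrow> bool" where
  "lex_less xs ys \<longleftrightarrow> (xs, ys) \<in> lexord {(a, b). a < b}"

text \<open>Labels after the first i vertices of the order \<sigma> have been numbered
  (the vertex \<sigma>!i gets number Suc i).\<close>
primrec lexdfs_label :: "('a \<Rightarrow> 'a \<Rightarrow> bool) \<Rightarrow> 'a \<Rightarrow> 'a list \<Rightarrow> nat \<Rightarrow> 'a \<Rightarrow> nat list" where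
  "lexdfs_label E s \<sigma> 0 v = (if v = s then [0] else [])"
| "lexdfs_label E s \<sigma> (Suc i) v =
     (if E (\<sigma> ! i) v \<and> v \<notin> set (take (Suc i) \<sigma>)
      then Suc i # lexdfs_label E s \<sigma> i v else lexdfs_label E s \<sigma> i v)"

primrec lexbfs_label :: "('a \<Rightarrow> 'a \<Rightarrow> bool) \<Rightarrow> 'a \<Rightarrow> nat \<Rightarrow> 'a list \<Rightarrow> nat \<Rightarrow> 'a \<Rightarrow> nat list" where
  "lexbfs_label E s n \<sigma> 0 v = (if v = s then [n] else [])"
| "lexbfs_label E s n \<sigma> (Suc i) v =
     (if E (\<sigma> ! i) v \<and> v \<notin> set (take (Suc i) \<sigma>)
      then lexbfs_label E s n \<sigma> i v @ [n - Suc i] else lexbfs_label E s n \<sigma> i v)"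

definition search_order :: "'a set \<Rightarrow> (nat \<Rightarrow> 'a \<Rightarrow> nat list) \<Rightarrow> 'a list \<Rightarrow> bool" where
  "search_order V lab \<sigma> \<longleftrightarrow> distinct \<sigma> \<and> set \<sigma> = V \<and>
     (\<forall>i < length \<sigma>. \<forall>w \<in> V - set (take i \<sigma>). \<not> lex_less (lab i (\<sigma> ! i)) (lab i w))"

definition lexdfs_order :: "'a set \<Rightarrow> ('a \<Rightarrow> 'a \<Rightarrow> bool) \<Rightarrow> 'a \<Rightarrow> 'a list \<Rightarrow> bool" where
  "lexdfs_order V E s \<sigma> \<longleftrightarrow> search_order V (lexdfs_label E s \<sigma>) \<sigma>"

definition lexbfs_order :: "'a set \<Rightarrow> ('a \<Rightarrow> 'a \<Rightarrow> bool) \<Rightarrow> 'a \<Rightarrow> 'a list \<Rightarrow> bool" where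
  "lexbfs_order V E s \<sigma> \<longleftrightarrow> search_order V (lexbfs_label E s (card V) \<sigma>) \<sigma>"

definition L_tree :: "('a \<Rightarrow> 'a \<Rightarrow> bool) \<Rightarrow> 'a list \<Rightarrow> 'a set set" where
  "L_tree E \<sigma> = {{\<sigma> ! i, \<sigma> ! (GREATEST j. j < i \<and> E (\<sigma> ! i) (\<sigma> ! j))} | i. 0 < i \<and> i < length \<sigma>}"

definition spanning_tree :: "'a set \<Rightarrow> ('a \<Rightarrow> 'a \<Rightarrow> bool) \<Rightarrow> 'a set set \<Rightarrow> bool" where
  "spanning_tree V E T \<longleftrightarrow> (\<forall>e \<in> T. \<exists>u v. e = {u, v} \<and> E u v) \<and>
     (\<forall>u\<in>V. \<forall>v\<in>V. (\<lambda>x y. {x, y} \<in> T)\<^sup>*\<^sup>* u v) \<and> card T = card V - 1"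

definition is_L_tree_of_LexDFS :: "'a set \<Rightarrow> ('a \<Rightarrow> 'a \<Rightarrow> bool) \<Rightarrow> 'a \<Rightarrow> 'a set set \<Rightarrow> bool" where
  "is_L_tree_of_LexDFS V E s T \<longleftrightarrow>
     (\<exists>\<sigma>. lexdfs_order V E s \<sigma> \<and> \<sigma> ! 0 = s \<and> L_tree E \<sigma> = T)"

definition is_L_tree_of_LexBFS :: "'a set \<Rightarrow> ('a \<Rightarrow> 'a \<Rightarrow> bool) \<Rightarrow> 'a \<Rightarrow> 'a set set \<Rightarrow> bool" where
  "is_L_tree_of_LexBFS V E s T \<longleftrightarrow>
     (\<exists>\<sigma>. lexbfs_order V E s \<sigma> \<and> \<sigma> ! 0 = s \<and> L_tree E \<sigma> = T)"

end

theory Submission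
  imports Defs "HOL-Library.List_Lexorder"
begin

text \<open>LexBFS and LexDFS are maximal neighbourhood searches: the label of an unnumbered vertex
  grows with its set of numbered neighbours. On a chordal graph every order \<open>\<sigma>\<close> of such a search
  is connected and its reverse is a perfect elimination order, since for each component of the
  unnumbered part the numbered vertices attached to it always form a clique. Consequently every
  earlier neighbour of a vertex is an ancestor of it in the L-tree of \<open>\<sigma>\<close>, which joins each vertex
  to its parent, the rightmost earlier neighbour. Given a second maximal neighbourhood labelling,
  build an order greedily by always taking the oldest unvisited ancestor of a vertex of maximal
  label: it sees all visited neighbours of that vertex, so its label is maximal as well. This
  order visits parents before children, and then the elimination property makes the rightmost
  earlier neighbour of each vertex in the new order its parent, so the two L-trees coincide.\<close>

lemma nth_notin_set_take: "distinct xs \<Longrightarrow> i < length xs \<Longrightarrow> xs ! i \<notin> set (take i xs)"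
  by (auto simp: in_set_conv_nth nth_eq_iff_index_eq)

lemma nth_in_set_take: "i < m \<Longrightarrow> i < length xs \<Longrightarrow> xs ! i \<in> set (take m xs)"
  by (metis in_set_conv_nth length_take min_less_iff_conj nth_take)

lemma nth_0_in_set_take: "0 < i \<Longrightarrow> i \<le> length xs \<Longrightarrow> xs ! 0 \<in> set (take i xs)"
  by (rule nth_in_set_take) auto

lemma nth_in_set_take_iff: "distinct xs \<Longrightarrow> j < length xs \<Longrightarrow> xs ! j \<in> set (take m xs) \<longleftrightarrow> j < m"
  by (auto simp: in_set_conv_nth nth_eq_iff_index_eq nth_in_set_take)

lemma in_set_take_nth: "x \<in> set (take i xs) \<Longrightarrow> \<exists>j<i. j < length xs \<and> xs ! j = x"
  by (auto simp: in_set_conv_nth)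

lemma nth_eq_nth_0_iff: "distinct xs \<Longrightarrow> i < length xs \<Longrightarrow> xs ! i = xs ! 0 \<longleftrightarrow> i = 0"
  using nth_eq_iff_index_eq[of xs i 0] by (cases xs) auto

lemma last_take_Suc: "n < length xs \<Longrightarrow> last (take (Suc n) xs) = xs ! n"
  by (simp add: take_Suc_conv_app_nth)

lemma length_le_card: "finite V \<Longrightarrow> distinct xs \<Longrightarrow> set xs \<subseteq> V \<Longrightarrow> length xs \<le> card V"
  by (metis card_mono distinct_card)

lemma lex_less_iff_less: "lex_less xs ys \<longleftrightarrow> xs < ys"
  by (simp add: lex_less_def list_less_def)

lemma sorted_desc_le_if_subset:
  fixes xs ys :: "nat list"
  assumes "sorted_wrt (>) xs" "sorted_wrt (>) ys" "set xs \<subseteq> set ys"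
  shows "xs \<le> ys"
  using assms
proof (induction ys arbitrary: xs)
  case Nil
  then show ?case by simp
next
  case (Cons y ys)
  show ?case
  proof (cases xs)
    case Nil
    then show ?thesis by (simp add: list_le_def list_less_def)
  next
    case (Cons x xs')
    with Cons.prems have "x \<le> y" by auto
    show ?thesis
    proof (cases "x = y")
      case True
      with Cons.prems \<open>xs = x # xs'\<close> have "xs' \<le> ys"
        by (intro Cons.IH) auto
      with True \<open>xs = x # xs'\<close> show ?thesis by (auto simp: list_le_def list_less_def)
    next
      case False
      with \<open>x \<le> y\<close> \<open>xs = x # xs'\<close> show ?thesis by (auto simp: list_le_def list_less_def)
    qed
  qed
qed

lemma sorted_desc_less_if_psubset:
  fixes xs ys :: "nat list"
  assumes "sorted_wrt (>) xs" "sorted_wrt (>) ys" "set xs \<subset> set ys"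
  shows "xs < ys"
  using sorted_desc_le_if_subset[OF assms(1,2)] assms(3) by (auto simp: order.order_iff_strict)

section \<open>LexBFS and LexDFS labels\<close>

definition earlier_nbrs :: "('a \<Rightarrow> 'a \<Rightarrow> bool) \<Rightarrow> 'a list \<Rightarrow> nat \<Rightarrow> 'a \<Rightarrow> nat set" where
  "earlier_nbrs E \<sigma> i v = {j. j < i \<and> E (\<sigma> ! j) v}"

lemma earlier_nbrs_subset: "earlier_nbrs E \<sigma> i v \<subseteq> {..<i}"
  by (auto simp: earlier_nbrs_def)

lemma sorted_desc_label_mono:
  fixes f :: "nat \<Rightarrow> nat" and lab :: "'a \<Rightarrow> nat list"
  assumes inj: "inj_on f {..<i}"
    and sorted: "\<And>v. sorted_wrt (>) (lab v)"
    and set_lab: "\<And>v. set (lab v) = f ` earlier_nbrs E \<sigma> i v"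
  shows "earlier_nbrs E \<sigma> i u \<subseteq> earlier_nbrs E \<sigma> i w \<Longrightarrow> lab u \<le> lab w"
    and "earlier_nbrs E \<sigma> i u \<subset> earlier_nbrs E \<sigma> i w \<Longrightarrow> lab u < lab w"
proof -
  assume "earlier_nbrs E \<sigma> i u \<subseteq> earlier_nbrs E \<sigma> i w"
  then have "set (lab u) \<subseteq> set (lab w)"
    unfolding set_lab by (rule image_mono)
  then show "lab u \<le> lab w"
    by (rule sorted_desc_le_if_subset[OF sorted sorted])
next
  assume "earlier_nbrs E \<sigma> i u \<subset> earlier_nbrs E \<sigma> i w"
  then have "set (lab u) \<subset> set (lab w)"
    unfolding set_lab by (rule image_strict_mono[OF inj_on_subset[OF inj earlier_nbrs_subset]])
  then show "lab u < lab w"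
    by (rule sorted_desc_less_if_psubset[OF sorted sorted])
qed

lemma lexdfs_label_unnumbered:
  "v \<notin> set (take i \<sigma>) \<Longrightarrow> v \<noteq> s \<Longrightarrow>
     lexdfs_label E s \<sigma> i v = map Suc (filter (\<lambda>j. E (\<sigma> ! j) v) (rev [0..<i]))"
proof (induction i)
  case (Suc i)
  then have "v \<notin> set (take i \<sigma>)"
    by (meson le_SucI order_refl set_take_subset_set_take subsetD)
  with Suc show ?case by auto
qed simp

lemma lexbfs_label_unnumbered:
  "v \<notin> set (take i \<sigma>) \<Longrightarrow> v \<noteq> s \<Longrightarrow>
     lexbfs_label E s n \<sigma> i v = map (\<lambda>j. n - Suc j) (filter (\<lambda>j. E (\<sigma> ! j) v) [0..<i])"
proof (induction i)
  case (Suc i)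
  then have "v \<notin> set (take i \<sigma>)"
    by (meson le_SucI order_refl set_take_subset_set_take subsetD)
  with Suc show ?case by auto
qed simp

lemma lexdfs_label_mono:
  assumes "u \<notin> set (take i \<sigma>)" "w \<notin> set (take i \<sigma>)" "u \<noteq> s" "w \<noteq> s"
  shows "earlier_nbrs E \<sigma> i u \<subseteq> earlier_nbrs E \<sigma> i w \<Longrightarrow>
      lexdfs_label E s \<sigma> i u \<le> lexdfs_label E s \<sigma> i w"
    and "earlier_nbrs E \<sigma> i u \<subset> earlier_nbrs E \<sigma> i w \<Longrightarrow>
      lexdfs_label E s \<sigma> i u < lexdfs_label E s \<sigma> i w"
proof -
  let ?lab = "\<lambda>v. map Suc (filter (\<lambda>j. E (\<sigma> ! j) v) (rev [0..<i]))"
  have "sorted_wrt (>) (?lab v)" for v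
    by (simp add: sorted_wrt_map sorted_wrt_filter sorted_wrt_rev)
  moreover have "set (?lab v) = Suc ` earlier_nbrs E \<sigma> i v" for v
    by (auto simp: earlier_nbrs_def)
  ultimately show "earlier_nbrs E \<sigma> i u \<subseteq> earlier_nbrs E \<sigma> i w \<Longrightarrow>
      lexdfs_label E s \<sigma> i u \<le> lexdfs_label E s \<sigma> i w"
    and "earlier_nbrs E \<sigma> i u \<subset> earlier_nbrs E \<sigma> i w \<Longrightarrow>
      lexdfs_label E s \<sigma> i u < lexdfs_label E s \<sigma> i w"
    using sorted_desc_label_mono[of Suc i ?lab] by (simp_all add: assms lexdfs_label_unnumbered)
qed

lemma lexbfs_label_mono:
  assumes "u \<notin> set (take i \<sigma>)" "w \<notin> set (take i \<sigma>)" "u \<noteq> s" "w \<noteq> s" "i \<le> n"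
  shows "earlier_nbrs E \<sigma> i u \<subseteq> earlier_nbrs E \<sigma> i w \<Longrightarrow>
      lexbfs_label E s n \<sigma> i u \<le> lexbfs_label E s n \<sigma> i w"
    and "earlier_nbrs E \<sigma> i u \<subset> earlier_nbrs E \<sigma> i w \<Longrightarrow>
      lexbfs_label E s n \<sigma> i u < lexbfs_label E s n \<sigma> i w"
proof -
  let ?f = "\<lambda>j. n - Suc j"
  let ?lab = "\<lambda>v. map ?f (filter (\<lambda>j. E (\<sigma> ! j) v) [0..<i])"
  have "sorted_wrt (>) (?lab v)" for v
    unfolding sorted_wrt_map
    by (rule sorted_wrt_filter, rule sorted_wrt_mono_rel[of _ "(<)"]) (use \<open>i \<le> n\<close> in auto)
  moreover have "set (?lab v) = ?f ` earlier_nbrs E \<sigma> i v" for v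
    by (auto simp: earlier_nbrs_def)
  moreover have "inj_on ?f {..<i}"
    using \<open>i \<le> n\<close> by (auto simp: inj_on_def)
  ultimately show "earlier_nbrs E \<sigma> i u \<subseteq> earlier_nbrs E \<sigma> i w \<Longrightarrow>
      lexbfs_label E s n \<sigma> i u \<le> lexbfs_label E s n \<sigma> i w"
    and "earlier_nbrs E \<sigma> i u \<subset> earlier_nbrs E \<sigma> i w \<Longrightarrow>
      lexbfs_label E s n \<sigma> i u < lexbfs_label E s n \<sigma> i w"
    using sorted_desc_label_mono[of ?f i ?lab] by (simp_all add: assms lexbfs_label_unnumbered)
qed

lemma lexdfs_label_append:
  "i \<le> length ps \<Longrightarrow> lexdfs_label E s (ps @ qs) i v = lexdfs_label E s ps i v"
  by (induction i) (auto simp: nth_append)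

lemma lexbfs_label_append:
  "i \<le> length ps \<Longrightarrow> lexbfs_label E s n (ps @ qs) i v = lexbfs_label E s n ps i v"
  by (induction i) (auto simp: nth_append)

section \<open>Induced paths in chordal graphs\<close>

definition induced_path :: "('a \<Rightarrow> 'a \<Rightarrow> bool) \<Rightarrow> 'a list \<Rightarrow> bool" where
  "induced_path E q \<longleftrightarrow> distinct q \<and> successively E q \<and>
     (\<forall>i j. Suc i < j \<and> j < length q \<longrightarrow> \<not> E (q ! i) (q ! j))"

lemma induced_path_take: "induced_path E q \<Longrightarrow> induced_path E (take n q)"
proof -
  assume q: "induced_path E q"
  then have "successively E (take n q)"
    unfolding induced_path_def by (metis append_take_drop_id successively_append_iff)
  with q show ?thesis
    unfolding induced_path_def by simp
qed

lemma successively_shortcut: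
  assumes "successively E q" "i < j" "j < length q" "0 < i \<Longrightarrow> E (q ! (i - 1)) (q ! j)"
  shows "successively E (take i q @ drop j q)"
proof -
  have "successively E (take i q)" "successively E (drop j q)"
    using assms(1) by (metis append_take_drop_id successively_append_iff)+
  with assms(2-4) show ?thesis
    by (cases i) (auto simp: successively_append_iff hd_drop_conv_nth last_take_Suc)
qed

lemma induced_path_of_walk:
  "successively E q \<Longrightarrow> q \<noteq> [] \<Longrightarrow>
     \<exists>q'. induced_path E q' \<and> q' \<noteq> [] \<and> hd q' = hd q \<and> last q' = last q \<and> set q' \<subseteq> set q"
proof (induction "length q" arbitrary: q rule: less_induct)
  case less
  show ?case
  proof (cases "induced_path E q")
    case True
    with less.prems show ?thesis by blast
  next
    case False
    txt \<open>Cut out a repeated vertex or a chord.\<close>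
    have "\<exists>i j. i < j \<and> j < length q \<and> (i = 0 \<longrightarrow> q ! j = q ! 0) \<and>
        (0 < i \<longrightarrow> E (q ! (i - 1)) (q ! j))"
    proof (cases "distinct q")
      case True
      with False less.prems obtain i j where "Suc i < j" "j < length q" "E (q ! i) (q ! j)"
        unfolding induced_path_def by blast
      then show ?thesis by (intro exI[of _ "Suc i"] exI[of _ j]) auto
    next
      case False
      then obtain i j where ij: "i < j" "j < length q" "q ! i = q ! j"
        by (metis distinct_conv_nth linorder_neqE_nat)
      with successively_nth[OF less.prems(1), of "i - 1"] show ?thesis
        by (intro exI[of _ i] exI[of _ j]) auto
    qed
    then obtain i j where ij: "i < j" "j < length q" "i = 0 \<Longrightarrow> q ! j = q ! 0"
      "0 < i \<Longrightarrow> E (q ! (i - 1)) (q ! j)"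
      by blast
    let ?q = "take i q @ drop j q"
    have "hd ?q = hd q"
      using ij less.prems(2) by (cases i) (auto simp: hd_drop_conv_nth hd_conv_nth nth_append)
    moreover have "last ?q = last q" "set ?q \<subseteq> set q" "?q \<noteq> []" "length ?q < length q"
      using ij by (auto dest: in_set_takeD in_set_dropD)
    moreover have "successively E ?q"
      using successively_shortcut[OF less.prems(1) ij(1,2,4)] .
    ultimately show ?thesis
      using less.hyps[of ?q] by (metis order.trans)
  qed
qed

locale connected_graph =
  fixes V :: "'a set" and E :: "'a \<Rightarrow> 'a \<Rightarrow> bool"
  assumes graph: "graph V E"
begin

lemma finite_V: "finite V"
  using graph by (simp add: graph_def)

lemma V_nonempty: "V \<noteq> {}"
  using graph by (simp add: graph_def)

lemma edge_in_V: "E u v \<Longrightarrow> u \<in> V \<and> v \<in> V"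
  using graph by (simp add: graph_def)

lemma edge_sym: "E u v \<Longrightarrow> E v u"
  using graph by (simp add: graph_def)

lemma edge_irrefl: "\<not> E v v"
  using graph by (simp add: graph_def)

lemma connected: "u \<in> V \<Longrightarrow> v \<in> V \<Longrightarrow> E\<^sup>*\<^sup>* u v"
  using graph by (simp add: graph_def)

lemma walk_in_V: "successively E q \<Longrightarrow> 2 \<le> length q \<Longrightarrow> set q \<subseteq> V"
  by (induction q rule: induct_list012) (fastforce dest: edge_in_V simp: Suc_le_eq)+

lemma induced_cycleI:
  assumes "distinct cs" "set cs \<subseteq> V" "3 \<le> length cs"
    and "\<And>i j. i < length cs \<Longrightarrow> j < length cs \<Longrightarrow>
      E (cs ! i) (cs ! j) \<longleftrightarrow> j = (i + 1) mod length cs \<or> i = (j + 1) mod length cs"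
  shows "induced_cycle V E cs"
  unfolding induced_cycle_def
proof (intro conjI allI impI)
  fix i assume "i < length cs"
  moreover have "(i + 1) mod length cs < length cs"
    using assms(3) by (intro mod_less_divisor) linarith
  ultimately show "E (cs ! i) (cs ! ((i + 1) mod length cs))"
    using assms(4) by blast
qed (use assms in auto)

lemma induced_path_adj_iff:
  assumes "induced_path E q" "i < length q" "j < length q"
  shows "E (q ! i) (q ! j) \<longleftrightarrow> j = Suc i \<or> i = Suc j"
proof
  assume "E (q ! i) (q ! j)"
  then have "i \<noteq> j" "\<not> Suc i < j" "\<not> Suc j < i"
    using assms edge_sym edge_irrefl unfolding induced_path_def by blast+
  then show "j = Suc i \<or> i = Suc j" by linarith
next
  assume "j = Suc i \<or> i = Suc j"
  then show "E (q ! i) (q ! j)"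
    using assms successively_nth edge_sym unfolding induced_path_def by blast
qed

lemma induced_cycle_Cons:
  assumes q: "induced_path E q" "2 \<le> length q" and b: "b \<notin> set q"
    and b_ends: "E b (hd q)" "E b (last q)"
    and b_interior: "\<And>t. 0 < t \<Longrightarrow> t < length q - 1 \<Longrightarrow> \<not> E b (q ! t)"
  shows "induced_cycle V E (b # q)"
proof (rule induced_cycleI)
  let ?n = "length q"
  have "q \<noteq> []"
    using q(2) by auto
  with b_ends have "E b (q ! 0)" "E b (q ! (?n - 1))"
    by (simp_all add: hd_conv_nth last_conv_nth)
  with b_interior have b_nbr: "E b (q ! t) \<longleftrightarrow> t = 0 \<or> t = ?n - 1" if "t < ?n" for t
    using that by fastforce
  then have nbr_b: "E (q ! t) b \<longleftrightarrow> t = 0 \<or> t = ?n - 1" if "t < ?n" for t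
    using that edge_sym by blast
  have cyclic_succ: "Suc i mod Suc ?n = (if i = ?n then 0 else Suc i)" if "i \<le> ?n" for i
    using that by auto
  fix i j assume "i < length (b # q)" "j < length (b # q)"
  then show "E ((b # q) ! i) ((b # q) ! j) \<longleftrightarrow>
      j = (i + 1) mod length (b # q) \<or> i = (j + 1) mod length (b # q)"
    using b_nbr nbr_b induced_path_adj_iff[OF q(1)] edge_irrefl q(2)
    by (cases i; cases j) (auto simp: cyclic_succ)
qed (use q b walk_in_V edge_in_V b_ends in \<open>auto simp: induced_path_def\<close>)

lemma chordal_path_ends_nbr_adj_second:
  assumes chordal: "chordal V E" and q: "induced_path E q" "2 \<le> length q" and b: "b \<notin> set q"
    and b_ends: "E b (hd q)" "E b (last q)"
  shows "E b (q ! 1)"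
proof -
  let ?P = "\<lambda>t. 0 < t \<and> t < length q \<and> E b (q ! t)"
  define j where "j = (LEAST t. ?P t)"
  have "q \<noteq> []"
    using q(2) by auto
  with b_ends q(2) have "?P (length q - 1)"
    by (auto simp: last_conv_nth)
  then have Pj: "?P j"
    unfolding j_def by (rule LeastI)
  have before_j: "\<not> E b (q ! t)" if "0 < t" "t < j" for t
    using not_less_Least[of t ?P] that Pj unfolding j_def by auto
  have "induced_cycle V E (b # take (Suc j) q)"
  proof (rule induced_cycle_Cons)
    show "E b (hd (take (Suc j) q))" "E b (last (take (Suc j) q))"
      using b_ends Pj by (auto simp: last_take_Suc)
  qed (use q b Pj before_j in \<open>auto simp: induced_path_take dest: in_set_takeD\<close>)
  then have "length (b # take (Suc j) q) \<le> 3"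
    using chordal unfolding chordal_def by blast
  with Pj have "j = 1" by auto
  with Pj show ?thesis by simp
qed

lemma chordal_walk_interior_nbr:
  assumes chordal: "chordal V E" and walk: "successively E (y # ps @ [v])"
    and "y \<noteq> v" "\<not> E y v"
  obtains c where "c \<in> set ps" "E y c" "\<And>b. b \<notin> set ps \<Longrightarrow> E b y \<Longrightarrow> E b v \<Longrightarrow> E b c"
proof -
  obtain q where q: "induced_path E q" "q \<noteq> []" "hd q = y" "last q = v"
    and q_set: "set q \<subseteq> set (y # ps @ [v])"
    using induced_path_of_walk[OF walk] by auto
  have dist: "distinct q" and q_walk: "successively E q"
    using q(1) by (auto simp: induced_path_def)
  have q0: "q ! 0 = y" and q_last: "q ! (length q - 1) = v"
    using q(2-4) by (auto simp: hd_conv_nth last_conv_nth)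
  have "length q \<noteq> 1"
    using q(2-4) \<open>y \<noteq> v\<close> by (cases q) auto
  moreover have "length q \<noteq> 2"
    using successively_nth[OF q_walk, of 0] q0 q_last \<open>\<not> E y v\<close> by auto
  ultimately have len: "3 \<le> length q"
    using length_greater_0_conv[of q] q(2) by linarith
  have "q ! 1 \<noteq> q ! 0" "q ! 1 \<noteq> q ! (length q - 1)"
    using len by (subst nth_eq_iff_index_eq[OF dist]; auto)+
  moreover have "q ! 1 \<in> set q"
    using len by simp
  ultimately have "q ! 1 \<in> set ps"
    using q_set q0 q_last by auto
  moreover have "E y (q ! 1)"
    using successively_nth[OF q_walk, of 0] len q0 by simp
  moreover have "E b (q ! 1)" if "b \<notin> set ps" "E b y" "E b v" for b
  proof (rule chordal_path_ends_nbr_adj_second[OF chordal q(1)])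
    show "b \<notin> set q"
      using that q_set edge_irrefl by auto
  qed (use len q(3,4) that in auto)
  ultimately show ?thesis using that by blast
qed

end

section \<open>Maximal neighbourhood searches on chordal graphs\<close>

definition connected_order :: "('a \<Rightarrow> 'a \<Rightarrow> bool) \<Rightarrow> 'a list \<Rightarrow> bool" where
  "connected_order E \<sigma> \<longleftrightarrow> (\<forall>i. 0 < i \<longrightarrow> i < length \<sigma> \<longrightarrow> (\<exists>j<i. E (\<sigma> ! i) (\<sigma> ! j)))"

definition rev_peo :: "('a \<Rightarrow> 'a \<Rightarrow> bool) \<Rightarrow> 'a list \<Rightarrow> bool" where
  "rev_peo E \<sigma> \<longleftrightarrow> (\<forall>i j k. i < j \<longrightarrow> j < k \<longrightarrow> k < length \<sigma> \<longrightarrow>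
     E (\<sigma> ! i) (\<sigma> ! k) \<longrightarrow> E (\<sigma> ! j) (\<sigma> ! k) \<longrightarrow> E (\<sigma> ! i) (\<sigma> ! j))"

lemma rev_peoD:
  "rev_peo E \<sigma> \<Longrightarrow> i < j \<Longrightarrow> j < k \<Longrightarrow> k < length \<sigma> \<Longrightarrow> E (\<sigma> ! i) (\<sigma> ! k) \<Longrightarrow>
     E (\<sigma> ! j) (\<sigma> ! k) \<Longrightarrow> E (\<sigma> ! i) (\<sigma> ! j)"
  unfolding rev_peo_def by blast

context connected_graph
begin

definition edge_outside :: "'a set \<Rightarrow> 'a \<Rightarrow> 'a \<Rightarrow> bool" where
  "edge_outside S a b \<longleftrightarrow> E a b \<and> a \<notin> S \<and> b \<notin> S"

lemma reach_outside_sym: "(edge_outside S)\<^sup>*\<^sup>* a b \<Longrightarrow> (edge_outside S)\<^sup>*\<^sup>* b a"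
proof (induction rule: rtranclp_induct)
  case (step y z)
  then show ?case
    by (meson converse_rtranclp_into_rtranclp edge_outside_def edge_sym)
qed simp

lemma reach_outside_anti: "S \<subseteq> S' \<Longrightarrow> (edge_outside S')\<^sup>*\<^sup>* a b \<Longrightarrow> (edge_outside S)\<^sup>*\<^sup>* a b"
  by (rule rtranclp_mono[THEN predicate2D, rotated]) (auto simp: edge_outside_def)

lemma walk_outside:
  "(edge_outside S)\<^sup>*\<^sup>* a b \<Longrightarrow> a \<notin> S \<Longrightarrow>
     \<exists>ps. ps \<noteq> [] \<and> hd ps = a \<and> last ps = b \<and> successively E ps \<and> set ps \<inter> S = {}"
proof (induction rule: rtranclp_induct)
  case base
  then show ?case by (intro exI[of _ "[a]"]) auto
next
  case (step y z)
  then obtain ps where "ps \<noteq> []" "hd ps = a" "last ps = y" "successively E ps" "set ps \<inter> S = {}"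
    by blast
  with step.hyps(2) show ?case
    by (intro exI[of _ "ps @ [z]"]) (auto simp: successively_append_iff edge_outside_def)
qed

text \<open>For every component of \<open>G - S\<close>, the vertices of \<open>S\<close> adjacent to it form a clique.\<close>
definition attachments_cliques :: "'a set \<Rightarrow> bool" where
  "attachments_cliques S \<longleftrightarrow> (\<forall>x\<in>S. \<forall>y\<in>S. \<forall>u w. x \<noteq> y \<longrightarrow> u \<notin> S \<longrightarrow> w \<notin> S \<longrightarrow>
     E x u \<longrightarrow> E y w \<longrightarrow> (edge_outside S)\<^sup>*\<^sup>* u w \<longrightarrow> E x y)"

lemma attachments_cliquesD:
  "attachments_cliques S \<Longrightarrow> x \<in> S \<Longrightarrow> y \<in> S \<Longrightarrow> x \<noteq> y \<Longrightarrow> u \<notin> S \<Longrightarrow> w \<notin> S \<Longrightarrow>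
     E x u \<Longrightarrow> E y w \<Longrightarrow> (edge_outside S)\<^sup>*\<^sup>* u w \<Longrightarrow> E x y"
  unfolding attachments_cliques_def by blast

text \<open>The vertex \<open>c\<close> is the second vertex of an induced path from \<open>y\<close> to \<open>v\<close> through the
  component of \<open>u\<close> and \<open>w\<close>.\<close>
lemma chordal_component_vertex_dominates:
  assumes chordal: "chordal V E" and cliques: "attachments_cliques S"
    and v: "v \<notin> S" and y: "y \<in> S" "\<not> E y v"
    and u: "u \<notin> insert v S" and w: "w \<notin> insert v S" and vu: "E v u" and yw: "E y w"
    and uw: "(edge_outside (insert v S))\<^sup>*\<^sup>* u w"
  obtains c where "c \<in> V" "c \<notin> insert v S" "E y c" "\<And>b. b \<in> S \<Longrightarrow> E b v \<Longrightarrow> E b c"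
proof -
  obtain ps where ps: "ps \<noteq> []" "hd ps = w" "last ps = u" "successively E ps"
    and ps_outside: "set ps \<inter> insert v S = {}"
    using walk_outside[OF reach_outside_sym[OF uw] w] by blast
  have "successively E (y # ps @ [v])"
    using ps yw edge_sym[OF vu] by (auto simp: successively_Cons successively_append_iff)
  moreover have "y \<noteq> v"
    using y v by auto
  ultimately obtain c where c: "c \<in> set ps" "E y c"
    and c_absorbs: "\<And>b. b \<notin> set ps \<Longrightarrow> E b y \<Longrightarrow> E b v \<Longrightarrow> E b c"
    using chordal_walk_interior_nbr[OF chordal _ _ y(2)] by blast
  have "(edge_outside S)\<^sup>*\<^sup>* v w"
  proof (rule converse_rtranclp_into_rtranclp)
    show "edge_outside S v u"
      using vu u v by (simp add: edge_outside_def)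
    show "(edge_outside S)\<^sup>*\<^sup>* u w"
      using reach_outside_anti[OF _ uw] by blast
  qed
  then have "E b y" if "b \<in> S" "E b v" for b
    using attachments_cliquesD[OF cliques that(1) y(1) _ v _ that(2) yw] that(2) y(2) w by blast
  moreover have "b \<notin> set ps" if "b \<in> S" for b
    using that ps_outside by blast
  moreover have "c \<in> V" "c \<notin> insert v S"
    using c edge_in_V ps_outside by auto
  ultimately show ?thesis
    using that c c_absorbs by blast
qed

end

text \<open>Maximal neighbourhood search labellings, which include LexBFS and LexDFS;
  \<open>lab \<sigma> i v\<close> is the label of \<open>v\<close> once the first \<open>i\<close> vertices of \<open>\<sigma>\<close> are numbered.\<close>
locale mns_labelling = connected_graph +
  fixes s :: 'a and lab :: "'a list \<Rightarrow> nat \<Rightarrow> 'a \<Rightarrow> nat list"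
  assumes s_in_V: "s \<in> V"
    and lab_append: "i \<le> length ps \<Longrightarrow> lab (ps @ qs) i v = lab ps i v"
    and lab_start: "v \<noteq> s \<Longrightarrow> lab ps 0 v < lab ps 0 s"
    and lab_mono: "\<lbrakk>distinct ps; set ps \<subseteq> V; i \<le> length ps; u \<notin> set (take i ps);
      w \<notin> set (take i ps); u \<noteq> s; w \<noteq> s; earlier_nbrs E ps i u \<subseteq> earlier_nbrs E ps i w\<rbrakk>
      \<Longrightarrow> lab ps i u \<le> lab ps i w"
    and lab_strict_mono: "\<lbrakk>distinct ps; set ps \<subseteq> V; i \<le> length ps; u \<notin> set (take i ps);
      w \<notin> set (take i ps); u \<noteq> s; w \<noteq> s; earlier_nbrs E ps i u \<subset> earlier_nbrs E ps i w\<rbrakk>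
      \<Longrightarrow> lab ps i u < lab ps i w"
begin

lemma search_order_maximal_nbrs:
  assumes so: "search_order V (lab \<sigma>) \<sigma>" "\<sigma> ! 0 = s"
    and i: "0 < i" "i < length \<sigma>" and w: "w \<in> V" "w \<notin> set (take i \<sigma>)"
  shows "\<not> earlier_nbrs E \<sigma> i (\<sigma> ! i) \<subset> earlier_nbrs E \<sigma> i w"
proof
  assume psubset: "earlier_nbrs E \<sigma> i (\<sigma> ! i) \<subset> earlier_nbrs E \<sigma> i w"
  have dist: "distinct \<sigma>" and set_\<sigma>: "set \<sigma> = V"
    using so(1) by (auto simp: search_order_def)
  have "\<sigma> ! i \<notin> set (take i \<sigma>)"
    using nth_notin_set_take[OF dist i(2)] .
  moreover have "s \<in> set (take i \<sigma>)"
    using nth_0_in_set_take[of i \<sigma>] so(2) i by simp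
  ultimately have "lab \<sigma> i (\<sigma> ! i) < lab \<sigma> i w"
    using lab_strict_mono[OF dist _ _ _ w(2) _ _ psubset] w(2) set_\<sigma> i(2) by auto
  with so(1) i(2) w show False
    by (auto simp: search_order_def lex_less_iff_less)
qed

lemma search_order_connected:
  assumes so: "search_order V (lab \<sigma>) \<sigma>" "\<sigma> ! 0 = s"
  shows "connected_order E \<sigma>"
  unfolding connected_order_def
proof (intro allI impI)
  fix i assume i: "0 < i" "i < length \<sigma>"
  have dist: "distinct \<sigma>" and set_\<sigma>: "set \<sigma> = V"
    using so(1) by (auto simp: search_order_def)
  have "E\<^sup>*\<^sup>* s (\<sigma> ! i)"
    using connected s_in_V set_\<sigma> i(2) by auto
  moreover have "s \<in> set (take i \<sigma>)"
    using nth_0_in_set_take[of i \<sigma>] so(2) i by simp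
  moreover have "\<sigma> ! i \<notin> set (take i \<sigma>)"
    using nth_notin_set_take[OF dist i(2)] .
  ultimately obtain x y where xy: "x \<in> set (take i \<sigma>)" "y \<notin> set (take i \<sigma>)" "E x y"
    by (induction rule: rtranclp_induct) auto
  then obtain j where j: "j < i" "\<sigma> ! j = x"
    using in_set_take_nth[OF xy(1)] by blast
  with xy have "earlier_nbrs E \<sigma> i y \<noteq> {}"
    by (auto simp: earlier_nbrs_def)
  moreover have "y \<in> V"
    using xy(3) edge_in_V by blast
  ultimately have "earlier_nbrs E \<sigma> i (\<sigma> ! i) \<noteq> {}"
    using search_order_maximal_nbrs[OF so i _ xy(2)] by blast
  then show "\<exists>j<i. E (\<sigma> ! i) (\<sigma> ! j)"
    by (auto simp: earlier_nbrs_def dest: edge_sym)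
qed

lemma chosen_vertex_adj_attachment:
  assumes chordal: "chordal V E" and so: "search_order V (lab \<sigma>) \<sigma>" "\<sigma> ! 0 = s"
    and k: "k < length \<sigma>" and cliques: "attachments_cliques (set (take k \<sigma>))"
    and y: "y \<in> set (take k \<sigma>)"
    and u: "u \<notin> set (take (Suc k) \<sigma>)" and w: "w \<notin> set (take (Suc k) \<sigma>)"
    and vu: "E (\<sigma> ! k) u" and yw: "E y w"
    and uw: "(edge_outside (set (take (Suc k) \<sigma>)))\<^sup>*\<^sup>* u w"
  shows "E (\<sigma> ! k) y"
proof (rule ccontr)
  let ?S = "set (take k \<sigma>)"
  assume "\<not> E (\<sigma> ! k) y"
  then have vy: "\<not> E y (\<sigma> ! k)"
    using edge_sym by blast
  have dist: "distinct \<sigma>"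
    using so(1) by (simp add: search_order_def)
  have take_Suc: "set (take (Suc k) \<sigma>) = insert (\<sigma> ! k) ?S"
    using k by (simp add: take_Suc_conv_app_nth)
  obtain c where c: "c \<in> V" "c \<notin> insert (\<sigma> ! k) ?S" "E y c"
    and dominates: "\<And>b. b \<in> ?S \<Longrightarrow> E b (\<sigma> ! k) \<Longrightarrow> E b c"
    using chordal_component_vertex_dominates[OF chordal cliques nth_notin_set_take[OF dist k] y vy]
      u w vu yw uw take_Suc by auto
  have "earlier_nbrs E \<sigma> k (\<sigma> ! k) \<subseteq> earlier_nbrs E \<sigma> k c"
    using dominates k by (auto simp: earlier_nbrs_def nth_in_set_take)
  moreover obtain j_y where "j_y < k" "\<sigma> ! j_y = y"
    using in_set_take_nth[OF y] by blast
  with c vy have "j_y \<in> earlier_nbrs E \<sigma> k c - earlier_nbrs E \<sigma> k (\<sigma> ! k)"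
    by (auto simp: earlier_nbrs_def dest: edge_sym)
  ultimately have "earlier_nbrs E \<sigma> k (\<sigma> ! k) \<subset> earlier_nbrs E \<sigma> k c"
    by blast
  moreover have "0 < k"
    using y by (cases k) auto
  ultimately show False
    using search_order_maximal_nbrs[OF so _ k] c by blast
qed

lemma attachments_cliques_take_Suc:
  assumes chordal: "chordal V E" and so: "search_order V (lab \<sigma>) \<sigma>" "\<sigma> ! 0 = s"
    and k: "k < length \<sigma>" and cliques: "attachments_cliques (set (take k \<sigma>))"
  shows "attachments_cliques (set (take (Suc k) \<sigma>))"
  unfolding attachments_cliques_def
proof (intro ballI allI impI)
  fix x y u w
  assume x: "x \<in> set (take (Suc k) \<sigma>)" and y: "y \<in> set (take (Suc k) \<sigma>)" and "x \<noteq> y"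
    and u: "u \<notin> set (take (Suc k) \<sigma>)" and w: "w \<notin> set (take (Suc k) \<sigma>)"
    and xu: "E x u" and yw: "E y w" and uw: "(edge_outside (set (take (Suc k) \<sigma>)))\<^sup>*\<^sup>* u w"
  have take_Suc: "set (take (Suc k) \<sigma>) = insert (\<sigma> ! k) (set (take k \<sigma>))"
    using k by (simp add: take_Suc_conv_app_nth)
  consider "x \<in> set (take k \<sigma>)" "y \<in> set (take k \<sigma>)" | "x = \<sigma> ! k" "y \<in> set (take k \<sigma>)"
    | "y = \<sigma> ! k" "x \<in> set (take k \<sigma>)"
    using x y \<open>x \<noteq> y\<close> take_Suc by auto
  then show "E x y"
  proof cases
    case 1
    moreover have "(edge_outside (set (take k \<sigma>)))\<^sup>*\<^sup>* u w"
      using reach_outside_anti[OF _ uw] take_Suc by auto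
    ultimately show ?thesis
      using attachments_cliquesD[OF cliques _ _ \<open>x \<noteq> y\<close> _ _ xu yw] u w take_Suc by blast
  next
    case 2
    then show ?thesis
      using chosen_vertex_adj_attachment[OF chordal so k cliques _ u w _ yw uw] xu by blast
  next
    case 3
    then have "E y x"
      using chosen_vertex_adj_attachment[OF chordal so k cliques _ w u _ xu]
        reach_outside_sym[OF uw] yw by blast
    then show ?thesis by (rule edge_sym)
  qed
qed

lemma search_order_rev_peo:
  assumes chordal: "chordal V E" and so: "search_order V (lab \<sigma>) \<sigma>" "\<sigma> ! 0 = s"
  shows "rev_peo E \<sigma>"
proof -
  have cliques: "attachments_cliques (set (take k \<sigma>))" if "k \<le> length \<sigma>" for k
    using that
  proof (induction k)
    case 0
    then show ?case by (simp add: attachments_cliques_def)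
  next
    case (Suc k)
    then show ?case by (intro attachments_cliques_take_Suc[OF chordal so]) auto
  qed
  have dist: "distinct \<sigma>"
    using so(1) by (simp add: search_order_def)
  show ?thesis
    unfolding rev_peo_def
  proof (intro allI impI)
    fix i j k assume ij: "i < j" and jk: "j < k" and k: "k < length \<sigma>"
      and ik: "E (\<sigma> ! i) (\<sigma> ! k)" and jk': "E (\<sigma> ! j) (\<sigma> ! k)"
    have "\<sigma> ! i \<in> set (take (Suc j) \<sigma>)" "\<sigma> ! j \<in> set (take (Suc j) \<sigma>)"
      using ij jk k by (simp_all add: nth_in_set_take)
    moreover have "\<sigma> ! i \<noteq> \<sigma> ! j"
      using dist ij jk k by (simp add: nth_eq_iff_index_eq)
    moreover have "\<sigma> ! k \<notin> set (take (Suc j) \<sigma>)"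
      using nth_in_set_take_iff[OF dist k] jk by simp
    ultimately show "E (\<sigma> ! i) (\<sigma> ! j)"
      using attachments_cliquesD[OF cliques[of "Suc j"]] ik jk' jk k by auto
  qed
qed

end

section \<open>The parent tree of a reverse perfect elimination order\<close>

lemma L_tree_eq_image:
  assumes "distinct \<rho>" "set \<rho> = V" "\<rho> ! 0 = s"
    and "\<And>i. 0 < i \<Longrightarrow> i < length \<rho> \<Longrightarrow>
      \<rho> ! (GREATEST j. j < i \<and> E (\<rho> ! i) (\<rho> ! j)) = f (\<rho> ! i)"
  shows "L_tree E \<rho> = (\<lambda>w. {w, f w}) ` (V - {s})"
proof -
  have "L_tree E \<rho> = (\<lambda>w. {w, f w}) ` ((!) \<rho> ` {i. 0 < i \<and> i < length \<rho>})"
    unfolding L_tree_def using assms(4) by (auto simp: image_def)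
  also have "(!) \<rho> ` {i. 0 < i \<and> i < length \<rho>} = V - {s}"
    using assms(1-3) nth_eq_nth_0_iff[OF assms(1)] by (force simp: in_set_conv_nth image_def)
  finally show ?thesis .
qed

locale rev_peo_search = connected_graph +
  fixes \<sigma> :: "'a list" and s :: 'a
  assumes distinct: "distinct \<sigma>" and set_\<sigma>: "set \<sigma> = V" and \<sigma>_0: "\<sigma> ! 0 = s"
    and connected_order: "connected_order E \<sigma>" and rev_peo: "rev_peo E \<sigma>"
begin

definition idx :: "'a \<Rightarrow> nat" where
  "idx w = (THE i. i < length \<sigma> \<and> \<sigma> ! i = w)"

lemma idx_nth: "i < length \<sigma> \<Longrightarrow> idx (\<sigma> ! i) = i"
  unfolding idx_def using distinct by (auto simp: nth_eq_iff_index_eq)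

lemma idx_less: "w \<in> V \<Longrightarrow> idx w < length \<sigma>"
  and nth_idx: "w \<in> V \<Longrightarrow> \<sigma> ! idx w = w"
  using idx_nth set_\<sigma> by (auto simp: in_set_conv_nth)

lemma idx_inj: "u \<in> V \<Longrightarrow> w \<in> V \<Longrightarrow> idx u = idx w \<Longrightarrow> u = w"
  by (metis nth_idx)

lemma idx_s: "idx s = 0"
proof -
  have "\<sigma> \<noteq> []"
    using set_\<sigma> V_nonempty by auto
  then show ?thesis
    using idx_nth[of 0] \<sigma>_0 by simp
qed

lemma idx_eq_0_iff: "w \<in> V \<Longrightarrow> idx w = 0 \<longleftrightarrow> w = s"
  by (metis idx_s nth_idx \<sigma>_0)

definition parent :: "'a \<Rightarrow> 'a" where
  "parent w = \<sigma> ! (GREATEST j. j < idx w \<and> E w (\<sigma> ! j))"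

lemma greatest_earlier_nbr:
  assumes "w \<in> V" "w \<noteq> s"
  defines "g \<equiv> GREATEST j. j < idx w \<and> E w (\<sigma> ! j)"
  shows "g < idx w" "E w (\<sigma> ! g)" "\<And>j. j < idx w \<Longrightarrow> E w (\<sigma> ! j) \<Longrightarrow> j \<le> g"
proof -
  let ?P = "\<lambda>j. j < idx w \<and> E w (\<sigma> ! j)"
  have "0 < idx w"
    using idx_eq_0_iff assms by auto
  then obtain j where "?P j"
    using connected_order idx_less[OF assms(1)] nth_idx[OF assms(1)]
    unfolding connected_order_def by metis
  then show "g < idx w" "E w (\<sigma> ! g)" "\<And>j. j < idx w \<Longrightarrow> E w (\<sigma> ! j) \<Longrightarrow> j \<le> g"
    using GreatestI_nat[of ?P j "idx w"] Greatest_le_nat[of ?P _ "idx w"] unfolding g_def by auto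
qed

lemma parent_nbr:
  assumes "w \<in> V" "w \<noteq> s"
  shows "parent w \<in> V" "E w (parent w)" "idx (parent w) < idx w"
  using greatest_earlier_nbr[OF assms] idx_less[OF assms(1)] idx_nth set_\<sigma>
  unfolding parent_def by auto

lemma earlier_nbr_idx_le_parent:
  assumes "u \<in> V" "w \<in> V" "E w u" "idx u < idx w"
  shows "idx u \<le> idx (parent w)"
proof -
  have "w \<noteq> s"
    using assms(4) idx_s by auto
  then show ?thesis
    using greatest_earlier_nbr[OF assms(2)] assms idx_less[OF assms(2)] idx_nth nth_idx
    unfolding parent_def by (metis order.strict_trans)
qed

lemma earlier_nbrs_adj:
  assumes "x \<in> V" "y \<in> V" "w \<in> V" "E x w" "E y w" "idx x < idx w" "idx y < idx w" "x \<noteq> y"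
  shows "E x y"
proof -
  have "idx x \<noteq> idx y"
    using assms idx_inj by blast
  then consider "idx x < idx y" | "idx y < idx x"
    by linarith
  then show ?thesis
  proof cases
    case 1
    have "E (\<sigma> ! idx x) (\<sigma> ! idx y)"
      by (rule rev_peoD[OF rev_peo 1 assms(7) idx_less[OF assms(3)]]) (simp_all add: nth_idx assms)
    then show ?thesis
      by (simp add: nth_idx assms)
  next
    case 2
    have "E (\<sigma> ! idx y) (\<sigma> ! idx x)"
      by (rule rev_peoD[OF rev_peo 2 assms(6) idx_less[OF assms(3)]]) (simp_all add: nth_idx assms)
    then show ?thesis
      by (simp add: nth_idx assms edge_sym)
  qed
qed

definition tree_edge :: "'a \<Rightarrow> 'a \<Rightarrow> bool" where
  "tree_edge a b \<longleftrightarrow> b \<in> V \<and> b \<noteq> s \<and> a = parent b"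

lemma proper_ancestor_idx_less: "tree_edge\<^sup>+\<^sup>+ a b \<Longrightarrow> idx a < idx b \<and> a \<in> V"
  by (induction rule: tranclp_induct) (auto simp: tree_edge_def dest: parent_nbr)

lemma earlier_nbr_proper_ancestor: "w \<in> V \<Longrightarrow> E u w \<Longrightarrow> idx u < idx w \<Longrightarrow> tree_edge\<^sup>+\<^sup>+ u w"
proof (induction "idx w" arbitrary: w u rule: less_induct)
  case less
  have u: "u \<in> V"
    using less.prems edge_in_V by blast
  have "w \<noteq> s"
    using less.prems idx_s by auto
  note parent = parent_nbr[OF less.prems(1) this]
  have tree: "tree_edge (parent w) w"
    using less.prems \<open>w \<noteq> s\<close> by (simp add: tree_edge_def)
  show ?case
  proof (cases "u = parent w")
    case True
    with tree show ?thesis by auto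
  next
    case False
    have "idx u \<le> idx (parent w)"
      using earlier_nbr_idx_le_parent[OF u less.prems(1) edge_sym[OF less.prems(2)] less.prems(3)] .
    with False have "idx u < idx (parent w)"
      using idx_inj[OF u parent(1)] by fastforce
    moreover have "E u (parent w)"
      using earlier_nbrs_adj[OF u parent(1) less.prems(1,2) edge_sym[OF parent(2)] less.prems(3)
          parent(3) False] .
    ultimately have "tree_edge\<^sup>+\<^sup>+ u (parent w)"
      using less.hyps[OF parent(3) parent(1)] by blast
    then show ?thesis using tree by (rule tranclp.trancl_into_trancl)
  qed
qed

lemma ancestors_comparable:
  "tree_edge\<^sup>*\<^sup>* x w \<Longrightarrow> tree_edge\<^sup>*\<^sup>* a w \<Longrightarrow> tree_edge\<^sup>*\<^sup>* x a \<or> tree_edge\<^sup>*\<^sup>* a x"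
proof (induction arbitrary: a rule: rtranclp_induct)
  case (step y z)
  from step.prems consider "a = z" | y' where "tree_edge\<^sup>*\<^sup>* a y'" "tree_edge y' z"
    by (blast elim: rtranclp.cases)
  then show ?case
  proof cases
    case 1
    with step.hyps show ?thesis by (meson rtranclp.rtrancl_into_rtrancl)
  next
    case (2 y')
    then have "y' = y"
      using step.hyps(2) by (simp add: tree_edge_def)
    with 2 step.IH show ?thesis by blast
  qed
qed simp

lemma proper_ancestor_adj_if_adj_descendant:
  "tree_edge\<^sup>*\<^sup>* a w \<Longrightarrow> tree_edge\<^sup>+\<^sup>+ x a \<Longrightarrow> E x w \<Longrightarrow> E x a"
proof (induction rule: rtranclp_induct)
  case (step y w)
  have w: "w \<in> V" "w \<noteq> s" and y: "y = parent w"
    using step.hyps(2) by (auto simp: tree_edge_def)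
  note parent = parent_nbr[OF w]
  have "tree_edge\<^sup>+\<^sup>+ x y"
    using step.prems(1) step.hyps(1) by (rule tranclp_rtranclp_tranclp)
  then have x: "idx x < idx y" "x \<in> V"
    using proper_ancestor_idx_less by auto
  then have "E x y"
    using earlier_nbrs_adj[OF x(2) parent(1) w(1) step.prems(2) edge_sym[OF parent(2)] _ parent(3)]
      y parent(3) by auto
  with step.IH step.prems(1) show ?case by blast
qed simp

definition parent_closed :: "'a list \<Rightarrow> bool" where
  "parent_closed ps \<longleftrightarrow> (\<forall>i<length ps. ps ! i \<noteq> s \<longrightarrow> parent (ps ! i) \<in> set (take i ps))"

lemma parent_closed_ancestor:
  "tree_edge\<^sup>*\<^sup>* a w \<Longrightarrow> parent_closed ps \<Longrightarrow> w \<in> set ps \<Longrightarrow> a \<in> set ps"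
proof (induction rule: converse_rtranclp_induct)
  case (step a y)
  then obtain i where "i < length ps" "ps ! i = y"
    by (auto simp: in_set_conv_nth)
  with step.hyps(1) step.prems(1) show ?case
    unfolding parent_closed_def tree_edge_def by (metis in_set_takeD)
qed simp

lemma parent_closed_proper_ancestor_earlier:
  "tree_edge\<^sup>+\<^sup>+ a b \<Longrightarrow> parent_closed ps \<Longrightarrow> j < length ps \<Longrightarrow> ps ! j = b \<Longrightarrow> a \<in> set (take j ps)"
proof (induction arbitrary: j rule: tranclp_induct)
  case (base b)
  then show ?case
    by (auto simp: parent_closed_def tree_edge_def)
next
  case (step y z)
  then have "y \<in> set (take j ps)"
    by (auto simp: parent_closed_def tree_edge_def)
  then obtain j' where "j' < j" "j' < length ps" "ps ! j' = y"
    using in_set_take_nth[of y j ps] by blast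
  with step.IH step.prems(1) have "a \<in> set (take j' ps)"
    by blast
  with \<open>j' < j\<close> show ?case
    using set_take_subset_set_take[of j' j ps] by auto
qed

lemma parent_closed_nbr_adj_unvisited_ancestor:
  assumes closed: "parent_closed ps" and a: "a \<notin> set ps" and aw: "tree_edge\<^sup>*\<^sup>* a w"
    and x: "x \<in> set ps" "x \<in> V" and xw: "E x w"
  shows "E x a"
proof -
  have w: "w \<in> V" "w \<notin> set ps"
    using edge_in_V[OF xw] parent_closed_ancestor[OF aw closed] a by auto
  have "\<not> idx w < idx x"
  proof
    assume "idx w < idx x"
    then have "tree_edge\<^sup>+\<^sup>+ w x"
      using earlier_nbr_proper_ancestor[OF x(2) edge_sym[OF xw]] by blast
    then show False
      using parent_closed_ancestor[OF _ closed x(1)] w(2) by (blast dest: tranclp_into_rtranclp)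
  qed
  moreover have "idx x \<noteq> idx w"
    using idx_inj[OF x(2) w(1)] x(1) w(2) by blast
  ultimately have "tree_edge\<^sup>+\<^sup>+ x w"
    using earlier_nbr_proper_ancestor[OF w(1) xw] by simp
  then have "tree_edge\<^sup>*\<^sup>* x a \<or> tree_edge\<^sup>*\<^sup>* a x"
    using ancestors_comparable[OF _ aw] by (blast dest: tranclp_into_rtranclp)
  moreover have "\<not> tree_edge\<^sup>*\<^sup>* a x"
    using parent_closed_ancestor[OF _ closed x(1)] a by blast
  moreover have "x \<noteq> a"
    using x(1) a by blast
  ultimately have "tree_edge\<^sup>+\<^sup>+ x a"
    by (metis rtranclpD)
  then show ?thesis
    using proper_ancestor_adj_if_adj_descendant[OF aw _ xw] by blast
qed

lemma unvisited_ancestor_with_visited_parent: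
  assumes w: "w \<in> V - set ps" and s: "s \<in> set ps"
  obtains a where "a \<in> V - set ps" "tree_edge\<^sup>*\<^sup>* a w" "parent a \<in> set ps"
proof -
  obtain a where a: "a \<in> V - set ps" "tree_edge\<^sup>*\<^sup>* a w"
    and a_min: "\<And>b. b \<in> V - set ps \<Longrightarrow> tree_edge\<^sup>*\<^sup>* b w \<Longrightarrow> idx a \<le> idx b"
    using ex_has_least_nat[of "\<lambda>b. b \<in> V - set ps \<and> tree_edge\<^sup>*\<^sup>* b w" w idx] w by blast
  have "a \<in> V" "a \<noteq> s"
    using a(1) s by auto
  note parent = parent_nbr[OF this]
  have "parent a \<in> set ps"
  proof (rule ccontr)
    assume "parent a \<notin> set ps"
    moreover have "tree_edge (parent a) a"
      using \<open>a \<in> V\<close> \<open>a \<noteq> s\<close> by (simp add: tree_edge_def)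
    then have "tree_edge\<^sup>*\<^sup>* (parent a) w"
      using a(2) by (rule converse_rtranclp_into_rtranclp)
    ultimately have "idx a \<le> idx (parent a)"
      using a_min parent(1) by blast
    with parent(3) show False by simp
  qed
  with a that show ?thesis by blast
qed

lemma parent_closed_earlier_nbr_le_parent:
  assumes closed: "parent_closed \<tau>" and \<tau>: "distinct \<tau>" "set \<tau> \<subseteq> V"
    and j: "j < i" "i < length \<tau>" "E (\<tau> ! i) (\<tau> ! j)"
    and j_p: "j_p < length \<tau>" "\<tau> ! j_p = parent (\<tau> ! i)"
  shows "j \<le> j_p"
proof -
  define w where "w = \<tau> ! i"
  define x where "x = \<tau> ! j"
  have j_len: "j < length \<tau>"
    using j by simp
  have w: "w \<in> V" and x: "x \<in> V" "E w x" "x \<noteq> w"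
    using \<tau> j j_len nth_eq_iff_index_eq[OF \<tau>(1) j_len j(2)] by (auto simp: x_def w_def)
  have "\<not> idx w < idx x"
  proof
    assume "idx w < idx x"
    then have "w \<in> set (take j \<tau>)"
      using earlier_nbr_proper_ancestor[OF x(1,2)]
        parent_closed_proper_ancestor_earlier[OF _ closed j_len] by (simp add: x_def)
    with j show False
      using nth_in_set_take_iff[OF \<tau>(1) j(2)] by (simp add: w_def)
  qed
  then have "idx x < idx w"
    using idx_inj[OF x(1) w] x(3) by fastforce
  then have "tree_edge\<^sup>+\<^sup>+ x w"
    using earlier_nbr_proper_ancestor[OF w edge_sym[OF x(2)]] by blast
  then have "x = parent w \<or> tree_edge\<^sup>+\<^sup>+ x (parent w)"
    by (cases rule: tranclp.cases) (auto simp: tree_edge_def)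
  then show "j \<le> j_p"
  proof
    assume "x = parent w"
    then show ?thesis
      using j_p nth_eq_iff_index_eq[OF \<tau>(1) j_len j_p(1)] by (simp add: x_def w_def)
  next
    assume "tree_edge\<^sup>+\<^sup>+ x (parent w)"
    then have "x \<in> set (take j_p \<tau>)"
      using parent_closed_proper_ancestor_earlier[OF _ closed j_p(1)] j_p(2) by (simp add: w_def)
    then show ?thesis
      using nth_in_set_take_iff[OF \<tau>(1) j_len] by (simp add: x_def)
  qed
qed

lemma parent_closed_rightmost_earlier_nbr:
  assumes closed: "parent_closed \<tau>" and \<tau>: "distinct \<tau>" "set \<tau> = V" "\<tau> ! 0 = s"
    and i: "0 < i" "i < length \<tau>"
  shows "\<tau> ! (GREATEST j. j < i \<and> E (\<tau> ! i) (\<tau> ! j)) = parent (\<tau> ! i)"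
proof -
  have w: "\<tau> ! i \<in> V" "\<tau> ! i \<noteq> s"
    using \<tau> i nth_eq_nth_0_iff[OF \<tau>(1) i(2)] by auto
  then have "parent (\<tau> ! i) \<in> set (take i \<tau>)"
    using closed i unfolding parent_closed_def by blast
  then obtain j_p where j_p: "j_p < i" "j_p < length \<tau>" "\<tau> ! j_p = parent (\<tau> ! i)"
    using in_set_take_nth[of "parent (\<tau> ! i)" i \<tau>] by blast
  have "(GREATEST j. j < i \<and> E (\<tau> ! i) (\<tau> ! j)) = j_p"
  proof (rule Greatest_equality)
    show "j_p < i \<and> E (\<tau> ! i) (\<tau> ! j_p)"
      using j_p parent_nbr(2)[OF w] by simp
  qed (use parent_closed_earlier_nbr_le_parent[OF closed \<tau>(1)] \<tau>(2) i(2) j_p(2,3) in auto)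
  with j_p show ?thesis
    by simp
qed

end

section \<open>Relabelling\<close>

locale rev_peo_relabelling = rev_peo_search + mns_labelling V E s lab
  for lab
begin

definition closed_prefix :: "'a list \<Rightarrow> bool" where
  "closed_prefix ps \<longleftrightarrow> distinct ps \<and> set ps \<subseteq> V \<and> (ps \<noteq> [] \<longrightarrow> ps ! 0 = s) \<and> parent_closed ps \<and>
     (\<forall>i<length ps. \<forall>w \<in> V - set (take i ps). \<not> lab ps i (ps ! i) < lab ps i w)"

lemma closed_prefix_snoc:
  assumes ps: "closed_prefix ps" and a: "a \<in> V" "a \<notin> set ps"
    and start: "ps = [] \<Longrightarrow> a = s" and parent: "a \<noteq> s \<Longrightarrow> parent a \<in> set ps"
    and max: "\<And>w. w \<in> V - set ps \<Longrightarrow> lab ps (length ps) w \<le> lab ps (length ps) a"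
  shows "closed_prefix (ps @ [a])"
proof -
  have lab_snoc: "lab (ps @ [a]) i = lab ps i" if "i \<le> length ps" for i
    using lab_append[OF that] by blast
  have "parent_closed (ps @ [a])"
    using ps parent unfolding closed_prefix_def parent_closed_def
    by (auto simp: nth_append less_Suc_eq)
  moreover have "\<not> lab (ps @ [a]) i ((ps @ [a]) ! i) < lab (ps @ [a]) i w"
    if "i < Suc (length ps)" "w \<in> V - set (take i (ps @ [a]))" for i w
  proof (cases "i < length ps")
    case True
    with ps that show ?thesis
      by (auto simp: closed_prefix_def lab_snoc nth_append)
  next
    case False
    with that(1) have "i = length ps"
      by simp
    with that(2) max[of w] show ?thesis
      by (auto simp: lab_snoc nth_append not_less)
  qed
  ultimately show ?thesis
    using ps a start unfolding closed_prefix_def by (auto simp: nth_append)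
qed

text \<open>The oldest unvisited ancestor of a vertex of maximal label also has maximal
  label, because it sees every visited neighbour of its descendant.\<close>
lemma closed_prefix_max_label_vertex:
  assumes ps: "closed_prefix ps" "ps \<noteq> []" and U: "V - set ps \<noteq> {}"
  obtains a where "a \<in> V - set ps" "parent a \<in> set ps"
    "\<And>w. w \<in> V - set ps \<Longrightarrow> lab ps (length ps) w \<le> lab ps (length ps) a"
proof -
  let ?k = "length ps"
  let ?U = "V - set ps"
  have dist: "distinct ps" and ps_V: "set ps \<subseteq> V" and ps_0: "ps ! 0 = s"
    and closed: "parent_closed ps"
    using ps by (auto simp: closed_prefix_def)
  have s: "s \<in> set ps"
    using ps_0 ps(2) by auto
  have fin: "finite (lab ps ?k ` ?U)"
    using finite_V by simp
  have "Max (lab ps ?k ` ?U) \<in> lab ps ?k ` ?U"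
    using Max_in[OF fin] U by simp
  then obtain w0 where "Max (lab ps ?k ` ?U) = lab ps ?k w0" "w0 \<in> ?U"
    by (rule imageE)
  then have w0: "w0 \<in> ?U" "\<And>w. w \<in> ?U \<Longrightarrow> lab ps ?k w \<le> lab ps ?k w0"
    using Max_ge[OF fin] by auto
  obtain a where a: "a \<in> ?U" "tree_edge\<^sup>*\<^sup>* a w0" and parent_visited: "parent a \<in> set ps"
    using unvisited_ancestor_with_visited_parent[OF w0(1) s] by blast
  have "earlier_nbrs E ps ?k w0 \<subseteq> earlier_nbrs E ps ?k a"
  proof
    fix j assume "j \<in> earlier_nbrs E ps ?k w0"
    then have j: "j < ?k" "E (ps ! j) w0"
      by (auto simp: earlier_nbrs_def)
    then have "ps ! j \<in> set ps" "ps ! j \<in> V"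
      using ps_V by auto
    with j show "j \<in> earlier_nbrs E ps ?k a"
      using parent_closed_nbr_adj_unvisited_ancestor[OF closed _ a(2)] a(1)
      by (simp add: earlier_nbrs_def)
  qed
  moreover have "w0 \<noteq> s" "w0 \<notin> set (take ?k ps)" "a \<notin> set (take ?k ps)"
    using w0(1) a(1) s by auto
  ultimately have w0_a: "lab ps ?k w0 \<le> lab ps ?k a"
    using lab_mono[OF dist ps_V order.refl] a(1) s by blast
  show ?thesis
  proof (rule that[OF a(1) parent_visited])
    fix w assume "w \<in> ?U"
    with w0(2) show "lab ps ?k w \<le> lab ps ?k a"
      using w0_a by (blast intro: order.trans)
  qed
qed

lemma closed_prefix_exists: "k \<le> card V \<Longrightarrow> \<exists>ps. closed_prefix ps \<and> length ps = k"
proof (induction k)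
  case 0
  then show ?case by (auto simp: closed_prefix_def parent_closed_def)
next
  case (Suc k)
  then obtain ps where ps: "closed_prefix ps" "length ps = k"
    by auto
  have U: "V - set ps \<noteq> {}"
  proof
    assume "V - set ps = {}"
    then have "card V \<le> card (set ps)"
      by (intro card_mono) auto
    moreover have "card (set ps) = k"
      using ps by (simp add: closed_prefix_def distinct_card)
    ultimately show False
      using Suc.prems by simp
  qed
  show ?case
  proof (cases "ps = []")
    case True
    have "lab [] 0 w \<le> lab [] 0 s" for w
      using lab_start[of w "[]"] by (cases "w = s") auto
    then have "closed_prefix [s]"
      using closed_prefix_snoc[OF ps(1) s_in_V] True by auto
    with True ps(2) show ?thesis by auto
  next
    case False
    then obtain a where "a \<in> V - set ps" "parent a \<in> set ps"
      "\<And>w. w \<in> V - set ps \<Longrightarrow> lab ps (length ps) w \<le> lab ps (length ps) a"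
      using closed_prefix_max_label_vertex[OF ps(1) _ U] by blast
    then have "closed_prefix (ps @ [a])"
      using closed_prefix_snoc[OF ps(1)] False by blast
    with ps(2) show ?thesis by auto
  qed
qed

theorem relabelled_search_same_L_tree:
  "\<exists>\<tau>. search_order V (lab \<tau>) \<tau> \<and> \<tau> ! 0 = s \<and> L_tree E \<tau> = L_tree E \<sigma>"
proof -
  obtain \<tau> where \<tau>: "closed_prefix \<tau>" "length \<tau> = card V"
    using closed_prefix_exists by blast
  have dist: "distinct \<tau>" and closed: "parent_closed \<tau>"
    using \<tau>(1) by (auto simp: closed_prefix_def)
  have set_\<tau>: "set \<tau> = V"
    using \<tau> finite_V by (metis card_subset_eq closed_prefix_def distinct_card)
  then have "\<tau> \<noteq> []"
    using V_nonempty by auto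
  then have \<tau>_0: "\<tau> ! 0 = s"
    using \<tau>(1) by (simp add: closed_prefix_def)
  have "search_order V (lab \<tau>) \<tau>"
    using \<tau>(1) set_\<tau> by (auto simp: closed_prefix_def search_order_def lex_less_iff_less)
  moreover have "L_tree E \<tau> = (\<lambda>w. {w, parent w}) ` (V - {s})"
    using parent_closed_rightmost_earlier_nbr[OF closed dist set_\<tau> \<tau>_0]
    by (rule L_tree_eq_image[OF dist set_\<tau> \<tau>_0])
  moreover have "L_tree E \<sigma> = (\<lambda>w. {w, parent w}) ` (V - {s})"
    using distinct set_\<sigma> \<sigma>_0 by (rule L_tree_eq_image) (simp add: parent_def idx_nth)
  ultimately show ?thesis
    using \<tau>_0 by auto
qed

end

lemma L_tree_transfer:
  assumes chordal: "chordal V E"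
    and lab1: "mns_labelling V E s lab1" and lab2: "mns_labelling V E s lab2"
    and so: "search_order V (lab1 \<sigma>) \<sigma>" "\<sigma> ! 0 = s"
  shows "\<exists>\<tau>. search_order V (lab2 \<tau>) \<tau> \<and> \<tau> ! 0 = s \<and> L_tree E \<tau> = L_tree E \<sigma>"
proof -
  interpret mns_labelling V E s lab1
    by (fact lab1)
  have "rev_peo_search V E \<sigma> s"
    using so search_order_connected[OF so] search_order_rev_peo[OF chordal so]
    by unfold_locales (auto simp: search_order_def)
  then interpret rev_peo_relabelling V E \<sigma> s lab2
    using lab2 by (simp add: rev_peo_relabelling_def)
  show ?thesis
    by (rule relabelled_search_same_L_tree)
qed

lemma mns_labelling_lexdfs:
  assumes "graph V E" "s \<in> V"
  shows "mns_labelling V E s (lexdfs_label E s)"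
proof (unfold_locales)
  show "lexdfs_label E s ps 0 v < lexdfs_label E s ps 0 s" if "v \<noteq> s" for ps v
    using that by (simp add: list_less_def)
  fix ps :: "'a list" and i u w
  assume "u \<notin> set (take i ps)" "w \<notin> set (take i ps)" "u \<noteq> s" "w \<noteq> s"
  note mono = lexdfs_label_mono[OF this]
  show "earlier_nbrs E ps i u \<subseteq> earlier_nbrs E ps i w \<Longrightarrow>
      lexdfs_label E s ps i u \<le> lexdfs_label E s ps i w"
    by (rule mono(1))
  show "earlier_nbrs E ps i u \<subset> earlier_nbrs E ps i w \<Longrightarrow>
      lexdfs_label E s ps i u < lexdfs_label E s ps i w"
    by (rule mono(2))
qed (use assms lexdfs_label_append in auto)

lemma mns_labelling_lexbfs:
  assumes "graph V E" "s \<in> V"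
  shows "mns_labelling V E s (lexbfs_label E s (card V))"
proof (unfold_locales)
  show "lexbfs_label E s (card V) ps 0 v < lexbfs_label E s (card V) ps 0 s" if "v \<noteq> s" for ps v
    using that by (simp add: list_less_def)
  fix ps :: "'a list" and i u w
  assume "distinct ps" "set ps \<subseteq> V" "i \<le> length ps"
    and uw: "u \<notin> set (take i ps)" "w \<notin> set (take i ps)" "u \<noteq> s" "w \<noteq> s"
  moreover have "finite V"
    using assms(1) by (simp add: graph_def)
  ultimately have "i \<le> card V"
    using length_le_card by fastforce
  note mono = lexbfs_label_mono[OF uw this]
  show "earlier_nbrs E ps i u \<subseteq> earlier_nbrs E ps i w \<Longrightarrow>
      lexbfs_label E s (card V) ps i u \<le> lexbfs_label E s (card V) ps i w"
    by (rule mono(1))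
  show "earlier_nbrs E ps i u \<subset> earlier_nbrs E ps i w \<Longrightarrow>
      lexbfs_label E s (card V) ps i u < lexbfs_label E s (card V) ps i w"
    by (rule mono(2))
qed (use assms lexbfs_label_append in auto)

theorem corollary15:
  fixes V :: "'a set" and E :: "'a \<Rightarrow> 'a \<Rightarrow> bool" and s :: 'a and T :: "'a set set"
  assumes "graph V E" and "chordal V E" and "s \<in> V" and "spanning_tree V E T"
  shows "is_L_tree_of_LexDFS V E s T \<longleftrightarrow> is_L_tree_of_LexBFS V E s T"
proof -
  have dfs: "mns_labelling V E s (lexdfs_label E s)"
    and bfs: "mns_labelling V E s (lexbfs_label E s (card V))"
    using assms(1,3) by (rule mns_labelling_lexdfs mns_labelling_lexbfs)+
  show ?thesis
    unfolding is_L_tree_of_LexDFS_def is_L_tree_of_LexBFS_def lexdfs_order_def lexbfs_order_def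
    using L_tree_transfer[OF assms(2) dfs bfs] L_tree_transfer[OF assms(2) bfs dfs] by metis
qed

end
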